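(* For any discrete random variables $U,V$, where $U$ has finite support $\mathcal{U}$, and any $\alpha>0$, $$\Pr\left(|h(V|U)-h(V)|>\alpha\right)<(|\mathcal{U}|+1)2^{-\alpha}.$$
   Context: $h(V|U)=-\log_2 p_{V|U}(V|U)$ and $h(V)=-\log_2 p_V(V)$ (random variables). *)

theory Defs
  imports "HOL-Probability.Probability"
begin

definition rv_pmf :: "'a measure \<Rightarrow> ('a \<Rightarrow> 'b) \<Rightarrow> 'b \<Rightarrow> real" where
  "rv_pmf M X x = measure M {\<omega> \<in> space M. X \<omega> = x}"

definition rv_joint_pmf :: "'a measure \<Rightarrow> ('a \<Rightarrow> 'u) \<Rightarrow> ('a \<Rightarrow> 'v) \<Rightarrow> 'u \<Rightarrow> 'v \<Rightarrow> real" where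
  "rv_joint_pmf M U V u v = measure M {\<omega> \<in> space M. U \<omega> = u \<and> V \<omega> = v}"

definition rv_cond_pmf :: "'a measure \<Rightarrow> ('a \<Rightarrow> 'u) \<Rightarrow> ('a \<Rightarrow> 'v) \<Rightarrow> 'v \<Rightarrow> 'u \<Rightarrow> real" where
  "rv_cond_pmf M U V v u = rv_joint_pmf M U V u v / rv_pmf M U u"

definition rv_support :: "'a measure \<Rightarrow> ('a \<Rightarrow> 'b) \<Rightarrow> 'b set" where
  "rv_support M X = {x. rv_pmf M X x > 0}"

definition info_h :: "'a measure \<Rightarrow> ('a \<Rightarrow> 'v) \<Rightarrow> 'a \<Rightarrow> real" where
  "info_h M V \<omega> = - log 2 (rv_pmf M V (V \<omega>))"

definition info_h_cond :: "'a measure \<Rightarrow> ('a \<Rightarrow> 'u) \<Rightarrow> ('a \<Rightarrow> 'v) \<Rightarrow> 'a \<Rightarrow> real" where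
  "info_h_cond M U V \<omega> = - log 2 (rv_cond_pmf M U V (V \<omega>) (U \<omega>))"

end

theory Submission
  imports Defs
begin

(*
  Write p for the joint pmf of (U, V) and p_U, p_V for its marginals.  Off the null event
  p(U, V) = 0 we have h(V|U) - h(V) = log2 (p_U p_V / p), so a deviation beyond alpha means
  p < 2^-alpha p_U p_V or p > 2^alpha p_U p_V.  Comparing the joint distribution pointwise with
  the product distribution shows that the first event has probability < 2^-alpha.  For the
  second, fix u in the support of U and let B_u be the set of v with
  p(u, v) > 2^alpha p_U(u) p_V(v); then Pr(U = u, V in B_u) <= Pr(V in B_u) <= 2^-alpha Pr(U = u, V in B_u) / p_U(u) <= 2^-alpha,
  and a union bound over the support of U finishes the proof.
*)

lemma measure_le_cmult_of_singletons:
  fixes N N' :: "'c::countable measure"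
  assumes "sets N = sets (count_space UNIV)" "sets N' = sets (count_space UNIV)"
    and "finite_measure N" "finite_measure N'" "c \<ge> 0"
    and "\<And>x. x \<in> A \<Longrightarrow> measure N {x} \<le> c * measure N' {x}"
  shows "measure N A \<le> c * measure N' A"
proof -
  have "emeasure N A = (\<integral>\<^sup>+x. emeasure N {x} \<partial>count_space A)"
    by (rule emeasure_countable_singleton) (use assms in auto)
  also have "\<dots> \<le> (\<integral>\<^sup>+x. ennreal c * emeasure N' {x} \<partial>count_space A)"
    using assms by (intro nn_integral_mono)
      (auto simp: finite_measure.emeasure_eq_measure ennreal_mult[symmetric] intro!: ennreal_leI)
  also have "\<dots> = ennreal c * emeasure N' A"
    using assms by (subst nn_integral_cmult)
      (auto intro!: emeasure_countable_singleton[symmetric] arg_cong2[where f="(*)"])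
  finally have "ennreal (measure N A) \<le> ennreal (c * measure N' A)"
    using assms by (simp add: finite_measure.emeasure_eq_measure ennreal_mult)
  then show ?thesis
    using assms by (simp add: ennreal_le_iff)
qed

lemma measure_less_cmult_of_singletons:
  fixes N N' :: "'c::countable measure"
  assumes "sets N = sets (count_space UNIV)" "sets N' = sets (count_space UNIV)"
    and "finite_measure N" "finite_measure N'" "c \<ge> 0"
    and "\<And>x. x \<in> A \<Longrightarrow> measure N {x} \<le> c * measure N' {x}"
    and "x\<^sub>0 \<in> A" "measure N {x\<^sub>0} < c * measure N' {x\<^sub>0}"
  shows "measure N A < c * measure N' A"
proof -
  have split: "measure K A = measure K {x\<^sub>0} + measure K (A - {x\<^sub>0})"
    if "sets K = sets (count_space UNIV)" "finite_measure K" for K :: "'c measure"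
    using finite_measure.finite_measure_Union[OF \<open>finite_measure K\<close>, of "{x\<^sub>0}" "A - {x\<^sub>0}"]
      that \<open>x\<^sub>0 \<in> A\<close> by (simp add: insert_absorb)
  have "measure N (A - {x\<^sub>0}) \<le> c * measure N' (A - {x\<^sub>0})"
    by (rule measure_le_cmult_of_singletons) (use assms in auto)
  then show ?thesis
    using assms(8) split[OF assms(1,3)] split[OF assms(2,4)] by (simp add: distrib_left)
qed

lemma measure_below_ratio_less:
  fixes N N' :: "'c::countable measure"
  assumes "sets N = sets (count_space UNIV)" "sets N' = sets (count_space UNIV)"
    and "finite_measure N" "prob_space N'" "a > 0"
  shows "measure N {x. measure N {x} < a * measure N' {x}} < a"
    (is "measure N ?B < a")
proof (cases "?B = {}")
  case True
  then show ?thesis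
    using \<open>a > 0\<close> by simp
next
  case False
  then obtain x\<^sub>0 where "x\<^sub>0 \<in> ?B" by blast
  have "measure N ?B < a * measure N' ?B"
  proof (rule measure_less_cmult_of_singletons)
    show "x\<^sub>0 \<in> ?B" by fact
    show "measure N {x\<^sub>0} < a * measure N' {x\<^sub>0}"
      using \<open>x\<^sub>0 \<in> ?B\<close> by simp
    show "measure N {x} \<le> a * measure N' {x}" if "x \<in> ?B" for x
      using that by simp
  qed (use assms prob_space.finite_measure in simp_all)
  also have "\<dots> \<le> a"
    using assms(4,5) by (simp add: prob_space.prob_le_1 mult_left_le)
  finally show ?thesis .
qed

lemma measure_distr_singleton:
  assumes "X \<in> measurable M (count_space UNIV)"
  shows "measure (distr M (count_space UNIV) X) {x} = rv_pmf M X x"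
  unfolding rv_pmf_def using assms
  by (subst measure_distr) (auto intro!: arg_cong[where f="measure M"])

lemma log_ratio_gt_cases:
  fixes p x :: real
  assumes "0 < p" "0 < x" "\<alpha> < \<bar>log 2 x - log 2 p\<bar>"
  shows "p < 2 powr - \<alpha> * x \<or> 2 powr \<alpha> * x < p"
proof -
  have "\<alpha> < log 2 x - log 2 p \<or> \<alpha> < log 2 p - log 2 x"
    using assms(3) by linarith
  then have "\<alpha> < log 2 (x / p) \<or> \<alpha> < log 2 (p / x)"
    using assms(1,2) by (simp add: log_divide)
  then show ?thesis
    using assms by (auto simp: less_log_iff powr_minus field_simps)
qed

lemma measurable_pair_count_space:
  fixes X :: "'a \<Rightarrow> 'c::countable" and Y :: "'a \<Rightarrow> 'd::countable"
  assumes "X \<in> measurable M (count_space UNIV)" "Y \<in> measurable M (count_space UNIV)"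
  shows "(\<lambda>\<omega>. (X \<omega>, Y \<omega>)) \<in> measurable M (count_space UNIV)"
proof -
  have "(\<lambda>\<omega>. (X \<omega>, Y \<omega>)) \<in> measurable M (count_space UNIV \<Otimes>\<^sub>M count_space UNIV)"
    using assms by measurable
  then show ?thesis
    by (simp add: pair_measure_countable)
qed

locale discrete_rv_pair = prob_space M
  for M :: "'a measure" +
  fixes U :: "'a \<Rightarrow> 'u::countable" and V :: "'a \<Rightarrow> 'v::countable"
  assumes U_measurable[measurable]: "U \<in> measurable M (count_space UNIV)"
    and V_measurable[measurable]: "V \<in> measurable M (count_space UNIV)"
begin

lemma pair_measurable: "(\<lambda>\<omega>. (U \<omega>, V \<omega>)) \<in> measurable M (count_space UNIV)"
  by (intro measurable_pair_count_space U_measurable V_measurable)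

lemma rv_pmf_pair: "rv_pmf M (\<lambda>\<omega>. (U \<omega>, V \<omega>)) (u, v) = rv_joint_pmf M U V u v"
  unfolding rv_pmf_def rv_joint_pmf_def by (auto intro!: arg_cong[where f="measure M"])

lemma joint_pmf_le_pmf_fst: "rv_joint_pmf M U V u v \<le> rv_pmf M U u"
  unfolding rv_joint_pmf_def rv_pmf_def by (rule finite_measure_mono) auto

lemma joint_pmf_le_pmf_snd: "rv_joint_pmf M U V u v \<le> rv_pmf M V v"
  unfolding rv_joint_pmf_def rv_pmf_def by (rule finite_measure_mono) auto

abbreviation joint_distr :: "('u \<times> 'v) measure" where
  "joint_distr \<equiv> distr M (count_space UNIV) (\<lambda>\<omega>. (U \<omega>, V \<omega>))"

abbreviation product_distr :: "('u \<times> 'v) measure" where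
  "product_distr \<equiv> distr M (count_space UNIV) U \<Otimes>\<^sub>M distr M (count_space UNIV) V"

lemma prob_space_joint_distr: "prob_space joint_distr"
  using pair_measurable by (rule prob_space_distr)

lemma measure_joint_distr: "measure joint_distr A = prob {\<omega> \<in> space M. (U \<omega>, V \<omega>) \<in> A}"
  using pair_measurable by (simp add: measure_distr vimage_def Int_commute Collect_conj_eq)

lemma prob_space_product_distr: "prob_space product_distr"
  by (intro prob_space_pair prob_space_distr U_measurable V_measurable)

lemma sets_product_distr: "sets product_distr = sets (count_space UNIV)"
proof -
  have "sets product_distr = sets (count_space UNIV \<Otimes>\<^sub>M count_space UNIV :: ('u \<times> 'v) measure)"
    by (rule sets_pair_measure_cong) simp_all
  also have "\<dots> = sets (count_space UNIV)"
    by (subst pair_measure_countable) simp_all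
  finally show ?thesis .
qed

lemma measure_product_distr_singleton:
  "measure product_distr {(u, v)} = rv_pmf M U u * rv_pmf M V v"
proof -
  interpret DU: prob_space "distr M (count_space UNIV) U"
    by (intro prob_space_distr U_measurable)
  interpret DV: prob_space "distr M (count_space UNIV) V"
    by (intro prob_space_distr V_measurable)
  have "emeasure product_distr ({u} \<times> {v})
      = emeasure (distr M (count_space UNIV) U) {u} * emeasure (distr M (count_space UNIV) V) {v}"
    by (rule DV.emeasure_pair_measure_Times) simp_all
  then show ?thesis
    by (simp add: measure_def enn2real_mult measure_distr_singleton[symmetric] U_measurable V_measurable)
qed

lemma prob_joint_pmf_eq_0: "prob {\<omega> \<in> space M. rv_joint_pmf M U V (U \<omega>) (V \<omega>) = 0} = 0"
proof -
  let ?Z = "{(u, v). rv_joint_pmf M U V u v = 0}"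
  have "measure joint_distr ?Z \<le> 0 * measure joint_distr ?Z"
  proof (rule measure_le_cmult_of_singletons)
    show "measure joint_distr {x} \<le> 0 * measure joint_distr {x}" if "x \<in> ?Z" for x
      using that by (auto simp: measure_distr_singleton[OF pair_measurable] rv_pmf_pair)
  qed (simp_all add: prob_space_joint_distr prob_space.finite_measure)
  then show ?thesis
    by (simp add: measure_joint_distr measure_le_0_iff)
qed

lemma prob_joint_pmf_below_less:
  assumes "a > 0"
  shows "prob {\<omega> \<in> space M. rv_joint_pmf M U V (U \<omega>) (V \<omega>)
      < a * (rv_pmf M U (U \<omega>) * rv_pmf M V (V \<omega>))} < a"
proof -
  have "{x. measure joint_distr {x} < a * measure product_distr {x}}
      = {(u, v). rv_joint_pmf M U V u v < a * (rv_pmf M U u * rv_pmf M V v)}"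
    by (auto simp: measure_distr_singleton[OF pair_measurable] rv_pmf_pair
        measure_product_distr_singleton)
  moreover have "measure joint_distr {x. measure joint_distr {x} < a * measure product_distr {x}} < a"
    using assms
    by (intro measure_below_ratio_less)
      (simp_all add: sets_product_distr prob_space_product_distr prob_space_joint_distr
        prob_space.finite_measure)
  ultimately show ?thesis
    by (simp add: measure_joint_distr)
qed

lemma prob_joint_pmf_above_le:
  assumes "b > 0" "u \<in> rv_support M U"
  shows "prob {\<omega> \<in> space M. U \<omega> = u
      \<and> b * (rv_pmf M U u * rv_pmf M V (V \<omega>)) < rv_joint_pmf M U V u (V \<omega>)} \<le> 1 / b"
proof -
  have pU: "rv_pmf M U u > 0"
    using assms(2) by (simp add: rv_support_def)
  let ?B = "{(u', v). u' = u \<and> b * (rv_pmf M U u * rv_pmf M V v) < rv_joint_pmf M U V u v}"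
  let ?c = "1 / (b * rv_pmf M U u)"
  define N\<^sub>u where "N\<^sub>u = distr M (count_space UNIV) (\<lambda>\<omega>. (u, V \<omega>))"
  have u_measurable: "(\<lambda>\<omega>. (u, V \<omega>)) \<in> measurable M (count_space UNIV)"
    by (intro measurable_pair_count_space measurable_const V_measurable) simp
  have N\<^sub>u: "sets N\<^sub>u = sets (count_space UNIV)" "finite_measure N\<^sub>u"
    unfolding N\<^sub>u_def using u_measurable by (simp_all add: prob_space_distr prob_space.finite_measure)
  have N\<^sub>u_singleton: "measure N\<^sub>u {(u, v)} = rv_pmf M V v" for v
    unfolding N\<^sub>u_def measure_distr_singleton[OF u_measurable] rv_pmf_def by simp
  have joint: "sets joint_distr = sets (count_space UNIV)" "finite_measure joint_distr"
    by (simp_all add: prob_space_joint_distr prob_space.finite_measure)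
  have joint_singleton: "measure joint_distr {(u, v)} = rv_joint_pmf M U V u v" for v
    by (simp add: measure_distr_singleton[OF pair_measurable] rv_pmf_pair)
  have "measure joint_distr ?B \<le> 1 * measure N\<^sub>u ?B"
  proof (rule measure_le_cmult_of_singletons[OF joint(1) N\<^sub>u(1) joint(2) N\<^sub>u(2)])
    show "measure joint_distr {x} \<le> 1 * measure N\<^sub>u {x}" if "x \<in> ?B" for x
      using that by (auto simp: joint_singleton N\<^sub>u_singleton joint_pmf_le_pmf_snd)
  qed simp
  also have "\<dots> = measure N\<^sub>u ?B"
    by simp
  also have "\<dots> \<le> ?c * measure joint_distr ?B"
  proof (rule measure_le_cmult_of_singletons[OF N\<^sub>u(1) joint(1) N\<^sub>u(2) joint(2)])
    show "measure N\<^sub>u {x} \<le> ?c * measure joint_distr {x}" if "x \<in> ?B" for x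
      using that assms(1) pU by (auto simp: joint_singleton N\<^sub>u_singleton field_simps)
  qed (use assms(1) pU in simp)
  also have "\<dots> \<le> ?c * rv_pmf M U u"
  proof -
    have "measure joint_distr ?B \<le> rv_pmf M U u"
      unfolding measure_joint_distr rv_pmf_def by (rule finite_measure_mono) auto
    then show ?thesis
      using assms(1) pU by (intro mult_left_mono) simp_all
  qed
  also have "\<dots> = 1 / b"
    using pU by simp
  finally show ?thesis
    by (simp add: measure_joint_distr)
qed

lemma info_deviation_cases:
  assumes "\<alpha> < \<bar>info_h_cond M U V \<omega> - info_h M V \<omega>\<bar>"
  shows "rv_joint_pmf M U V (U \<omega>) (V \<omega>) = 0
    \<or> rv_joint_pmf M U V (U \<omega>) (V \<omega>) < 2 powr - \<alpha> * (rv_pmf M U (U \<omega>) * rv_pmf M V (V \<omega>))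
    \<or> U \<omega> \<in> rv_support M U
      \<and> 2 powr \<alpha> * (rv_pmf M U (U \<omega>) * rv_pmf M V (V \<omega>)) < rv_joint_pmf M U V (U \<omega>) (V \<omega>)"
proof (cases "rv_joint_pmf M U V (U \<omega>) (V \<omega>) = 0")
  case False
  let ?p = "rv_joint_pmf M U V (U \<omega>) (V \<omega>)"
  have p: "0 < ?p"
    using False by (simp add: rv_joint_pmf_def order_less_le)
  then have pU: "0 < rv_pmf M U (U \<omega>)" and pV: "0 < rv_pmf M V (V \<omega>)"
    using joint_pmf_le_pmf_fst joint_pmf_le_pmf_snd by (blast intro: less_le_trans)+
  have "info_h_cond M U V \<omega> - info_h M V \<omega>
      = log 2 (rv_pmf M U (U \<omega>) * rv_pmf M V (V \<omega>)) - log 2 ?p"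
    using p pU pV by (simp add: info_h_cond_def info_h_def rv_cond_pmf_def log_divide log_mult)
  with assms have "?p < 2 powr - \<alpha> * (rv_pmf M U (U \<omega>) * rv_pmf M V (V \<omega>))
      \<or> 2 powr \<alpha> * (rv_pmf M U (U \<omega>) * rv_pmf M V (V \<omega>)) < ?p"
    using p pU pV by (intro log_ratio_gt_cases) simp_all
  then show ?thesis
    using pU by (auto simp: rv_support_def)
qed simp

end

theorem lemma30:
  fixes M :: "'a measure" and U :: "'a \<Rightarrow> 'u::countable" and V :: "'a \<Rightarrow> 'v::countable"
    and \<alpha> :: real
  assumes "prob_space M"
    and "U \<in> measurable M (count_space UNIV)"
    and "V \<in> measurable M (count_space UNIV)"
    and "finite (rv_support M U)"
    and "\<alpha> > 0"
  shows "measure M {\<omega> \<in> space M. \<bar>info_h_cond M U V \<omega> - info_h M V \<omega>\<bar> > \<alpha>}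
           < (real (card (rv_support M U)) + 1) * 2 powr (- \<alpha>)"
proof -
  interpret discrete_rv_pair M U V
    using assms(1-3) by (intro discrete_rv_pair.intro discrete_rv_pair_axioms.intro)
  let ?p = "rv_joint_pmf M U V" and ?pU = "rv_pmf M U" and ?pV = "rv_pmf M V"
  let ?S = "rv_support M U"
  let ?deviation = "{\<omega> \<in> space M. \<bar>info_h_cond M U V \<omega> - info_h M V \<omega>\<bar> > \<alpha>}"
  define Z where "Z = {\<omega> \<in> space M. ?p (U \<omega>) (V \<omega>) = 0}"
  define Below where
    "Below = {\<omega> \<in> space M. ?p (U \<omega>) (V \<omega>) < 2 powr - \<alpha> * (?pU (U \<omega>) * ?pV (V \<omega>))}"
  define Above where
    "Above u = {\<omega> \<in> space M. U \<omega> = u \<and> 2 powr \<alpha> * (?pU u * ?pV (V \<omega>)) < ?p u (V \<omega>)}" for u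
  have events: "Z \<in> events" "Below \<in> events" "Above u \<in> events" for u
    unfolding Z_def Below_def Above_def by measurable
  have "?deviation \<subseteq> Z \<union> Below \<union> (\<Union>u\<in>?S. Above u)"
    using info_deviation_cases by (fastforce simp: Z_def Below_def Above_def)
  then have "prob ?deviation \<le> prob (Z \<union> Below \<union> (\<Union>u\<in>?S. Above u))"
    using events assms(4) by (intro finite_measure_mono) auto
  also have "\<dots> \<le> prob Z + prob Below + (\<Sum>u\<in>?S. prob (Above u))"
    using events assms(4)
    by (intro order_trans[OF measure_Un_le] add_mono measure_Un_le measure_UNION_le) auto
  finally have "prob ?deviation \<le> prob Z + prob Below + (\<Sum>u\<in>?S. prob (Above u))" .
  moreover have "prob Z = 0"
    unfolding Z_def by (rule prob_joint_pmf_eq_0)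
  moreover have "prob Below < 2 powr - \<alpha>"
    unfolding Below_def by (rule prob_joint_pmf_below_less) simp
  moreover have "(\<Sum>u\<in>?S. prob (Above u)) \<le> card ?S * 2 powr - \<alpha>"
    using sum_mono[of ?S "\<lambda>u. prob (Above u)" "\<lambda>_. 2 powr - \<alpha>"]
      prob_joint_pmf_above_le[of "2 powr \<alpha>"] by (simp add: Above_def powr_minus_divide)
  ultimately show ?thesis
    by (simp add: algebra_simps)
qed

end
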